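(* Let $e_1,e_2,e_3$ be nonzero integers with $e_1+e_2+e_3=0$, $\gcd(e_1,e_2,e_3)\in\{1,2\}$ and $v_2(e_1)=v_2(e_2)<v_2(e_3)$. Let $(a,b,c)$ be a primitive triple of odd integers with $e_1a^2+e_2b^2+e_3c^2=0$ and $a\equiv b\equiv c\equiv 1\pmod 4$. Let $n$ be a positive integer all of whose prime factors are nonzero quadratic residues modulo each odd prime factor of $e_1e_2e_3$. Then $\frac18(a+b)(b+c)(c+a)$ is an integer congruent to $1$ modulo $4$, and it is a quadratic residue modulo each prime factor of $n$.
   Context: $v_2$ denotes the $2$-adic valuation. *)

theory Defs
  imports "HOL-Number_Theory.Number_Theory"
begin

end

theory Submission
  imports Defs "HOL-Computational_Algebra.Squarefree"
begin

(*
  Put x = (b + c)/2, y = (c + a)/2, z = (a + b)/2. Since a, b, c are 1 mod 4, these are odd,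
  (a + b)(b + c)(c + a)/8 = xyz is 1 mod 4, and substituting a = y + z - x etc. turns the conic
  into e1 yz + e2 zx + e3 xy = 0. A prime r not dividing e1 e2 e3 misses one of x, y, z by
  primitivity, and the equation then forces the r-adic valuations of the other two to agree, so
  v_r(xyz) is even. Hence xyz is a square times a product of numbers r* = (-1)^((r-1)/2) r with
  r an odd prime factor of e1 e2 e3, and by quadratic reciprocity each such r* is a square modulo
  every prime factor p of n, because p is a square modulo r.
*)

(* The r* = (-1)^((r-1)/2) r of quadratic reciprocity (see pstar_eq_sign_power), extended to
   every odd m as the one of m, -m that is 1 mod 4. *)
definition pstar :: "int \<Rightarrow> int" where
  "pstar m = (if m mod 4 = 1 then m else - m)"

lemma pstar_uminus:
  fixes m :: int
  assumes "odd m"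
  shows "pstar (- m) = pstar m"
proof -
  have "m mod 4 = 1 \<or> m mod 4 = 3"
    using assms by presburger
  then show ?thesis
    unfolding pstar_def by (auto simp: zmod_zminus1_eq_if)
qed

lemma pstar_mult:
  fixes m n :: int
  assumes "odd m" "odd n"
  shows "pstar (m * n) = pstar m * pstar n"
proof -
  have "m mod 4 = 1 \<or> m mod 4 = 3" "n mod 4 = 1 \<or> n mod 4 = 3"
    using assms by presburger+
  moreover have "(m * n) mod 4 = (m mod 4) * (n mod 4) mod 4"
    by (simp add: mod_mult_eq)
  ultimately show ?thesis
    unfolding pstar_def by auto
qed

lemma pstar_square_mult:
  fixes m t :: int
  assumes "odd t"
  shows "pstar (t\<^sup>2 * m) = t\<^sup>2 * pstar m"
proof -
  obtain k where "t = 2 * k + 1"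
    using assms by (metis oddE)
  then have "t\<^sup>2 * m = 4 * ((k\<^sup>2 + k) * m) + m"
    by (simp add: algebra_simps power2_eq_square)
  then show ?thesis
    unfolding pstar_def by auto
qed

lemma pstar_eq_sign_power:
  fixes r :: int
  assumes "odd r" "r > 0"
  shows "pstar r = (-1) ^ nat ((r - 1) div 2) * r"
proof -
  define k where "k = r div 4"
  have "r = 4 * k + 1 \<or> r = 4 * k + 3" "k \<ge> 0"
    using assms unfolding k_def by presburger+
  then show ?thesis
    unfolding pstar_def by (auto simp: nat_mult_distrib nat_add_distrib power_add power_mult)
qed

lemma pstar_eq_self:
  fixes m :: int
  assumes "[m = 1] (mod 4)"
  shows "pstar m = m"
  using assms unfolding pstar_def cong_def by simp

lemma QuadRes_mult:
  assumes "QuadRes p a" "QuadRes p b"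
  shows "QuadRes p (a * b)"
proof -
  obtain y z where "[y\<^sup>2 = a] (mod p)" "[z\<^sup>2 = b] (mod p)"
    using assms unfolding QuadRes_def by blast
  then have "[(y * z)\<^sup>2 = a * b] (mod p)"
    by (metis cong_mult power_mult_distrib)
  then show ?thesis
    unfolding QuadRes_def by blast
qed

lemma QuadRes_2_odd:
  fixes a :: int
  assumes "odd a"
  shows "QuadRes 2 a"
proof -
  have "[1\<^sup>2 = a] (mod 2)"
    using assms by (simp add: cong_def odd_iff_mod_2_eq_one)
  then show ?thesis
    unfolding QuadRes_def by blast
qed

lemma euler_criterion_int:
  fixes p a :: int
  assumes "prime p" "2 < p"
  shows "[Legendre a p = a ^ nat ((p - 1) div 2)] (mod p)"
proof -
  have "int (nat p) = p" "prime (nat p)" "2 < nat p" "(nat p - 1) div 2 = nat ((p - 1) div 2)"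
    using assms by (auto simp: nat_div_distrib)
  then show ?thesis
    using euler_criterion[of "nat p" a] by metis
qed

lemma QuadRes_if_power_cong_1:
  fixes p a :: int
  assumes "prime p" "2 < p" "[a ^ nat ((p - 1) div 2) = 1] (mod p)"
  shows "QuadRes p a"
proof -
  have "[Legendre a p = 1] (mod p)"
    using euler_criterion_int[OF assms(1,2)] assms(3) by (rule cong_trans)
  moreover have "\<not> [0 = 1] (mod p)" "\<not> [-1 = 1] (mod p)"
    using assms(2) by (simp_all add: cong_def zmod_minus1)
  ultimately show ?thesis
    unfolding Legendre_def by (auto split: if_splits)
qed

lemma reciprocity_QuadRes_pstar:
  fixes p r :: int
  assumes p: "prime p" "odd p" and r: "prime r" "odd r"
    and "\<not> r dvd p" "QuadRes r p"
  shows "QuadRes p (pstar r)"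
proof -
  have "2 < p" "2 < r"
    using prime_ge_2_int[OF p(1)] prime_ge_2_int[OF r(1)] p(2) r(2) by (auto simp: order_le_less)
  have "p \<noteq> r"
    using assms(5) by auto
  define hp hr where "hp = nat ((p - 1) div 2)" and "hr = nat ((r - 1) div 2)"
  \<comment> \<open>Euler: (r*)^hp = (-1)^(hp hr) r^hp, which is congruent to (-1)^(hp hr) (r/p) = (p/r) = 1.\<close>
  have "Legendre p r = 1"
    using assms(5,6) unfolding Legendre_def by (simp add: cong_0_iff)
  moreover have "Legendre p r * Legendre r p = (-1) ^ (hp * hr)"
    using Quadratic_Reciprocity_int[of p r] p(1) r(1) \<open>2 < p\<close> \<open>2 < r\<close> \<open>p \<noteq> r\<close>
    unfolding hp_def hr_def by (simp add: nat_mult_distrib)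
  ultimately have "[(-1) ^ (hp * hr) = r ^ hp] (mod p)"
    using euler_criterion_int[OF p(1) \<open>2 < p\<close>, of r] unfolding hp_def by simp
  then have "[(-1) ^ (hp * hr) * r ^ hp = (-1) ^ (hp * hr) * (-1) ^ (hp * hr)] (mod p)"
    by (rule cong_scalar_left[OF cong_sym])
  moreover have "pstar r ^ hp = (-1) ^ (hp * hr) * r ^ hp"
    using pstar_eq_sign_power[OF r(2)] \<open>2 < r\<close> unfolding hr_def
    by (simp add: power_mult_distrib mult.commute[of hp] power_mult)
  ultimately have "[pstar r ^ hp = 1] (mod p)"
    by (simp flip: power_add)
  then show ?thesis
    using QuadRes_if_power_cong_1 p(1) \<open>2 < p\<close> unfolding hp_def by blast
qed

lemma QuadRes_pstar_prod_mset:
  fixes A :: "int multiset"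
  assumes "\<And>r. r \<in># A \<Longrightarrow> odd r \<and> QuadRes p (pstar r)"
  shows "QuadRes p (pstar (prod_mset A))"
  using assms
proof (induction A)
  case empty
  have "QuadRes p 1"
    unfolding QuadRes_def by (metis cong_refl one_power2)
  then show ?case
    by (simp add: pstar_def)
next
  case (add r A)
  have "odd (prod_mset A)"
    using add.prems by (auto simp: prime_dvd_prod_mset_iff[OF two_is_prime])
  then show ?case
    using add pstar_mult QuadRes_mult by simp
qed

lemma QuadRes_pstar_if_prime_divisors:
  fixes s p :: int
  assumes "odd s" "\<And>r. prime r \<Longrightarrow> r dvd s \<Longrightarrow> QuadRes p (pstar r)"
  shows "QuadRes p (pstar s)"
proof -
  have "s \<noteq> 0"
    using assms(1) by auto
  have "QuadRes p (pstar (prod_mset (prime_factorization s)))"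
    using assms by (intro QuadRes_pstar_prod_mset) (auto simp: in_prime_factors_iff intro: dvd_trans)
  moreover have "prod_mset (prime_factorization s) = \<bar>s\<bar>"
    using \<open>s \<noteq> 0\<close> by (simp add: prod_mset_prime_factorization)
  moreover have "pstar \<bar>s\<bar> = pstar s"
    using assms(1) pstar_uminus by (cases "s \<ge> 0") auto
  ultimately show ?thesis
    by simp
qed

lemma QuadRes_pstar_if_odd_multiplicity:
  fixes M p :: int
  assumes "odd M" "\<And>r. prime r \<Longrightarrow> odd (multiplicity r M) \<Longrightarrow> QuadRes p (pstar r)"
  shows "QuadRes p (pstar M)"
proof -
  define s t where "s = squarefree_part M" and "t = square_part M"
  have M: "M = t\<^sup>2 * s"
    unfolding s_def t_def using squarefree_decompose[of M] by (simp add: mult.commute)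
  then have "odd s" "odd t" "s \<noteq> 0"
    using assms(1) by auto
  have "QuadRes p (pstar s)"
  proof (rule QuadRes_pstar_if_prime_divisors[OF \<open>odd s\<close>])
    fix r assume r: "prime r" "r dvd s"
    then have "multiplicity r s > 0"
      using prime_multiplicity_gt_zero_iff[OF prime_imp_prime_elem \<open>s \<noteq> 0\<close>] by blast
    then have "odd (multiplicity r M)"
      using prime_multiplicity_squarefree_part[OF r(1), of M] unfolding s_def by presburger
    then show "QuadRes p (pstar r)"
      using assms(2) r(1) by blast
  qed
  moreover have "QuadRes p (t\<^sup>2)"
    unfolding QuadRes_def using cong_refl by blast
  ultimately show ?thesis
    using M pstar_square_mult[OF \<open>odd t\<close>] QuadRes_mult by metis
qed

lemma multiplicity_eq_on_conic:
  fixes r x y z e1 e2 e3 :: int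
  assumes r: "prime r" and "\<not> r dvd z" "\<not> r dvd e1" "\<not> r dvd e2"
    and "x \<noteq> 0" "y \<noteq> 0"
    and conic: "e1 * y * z + e2 * z * x + e3 * x * y = 0"
  shows "multiplicity r x = multiplicity r y"
proof -
  define w where "w = - (e1 * z + e3 * x)"
  have eq: "(e2 * z) * x = y * w"
    using conic unfolding w_def by (simp add: algebra_simps)
  have "\<not> r dvd e2 * z" "e2 * z \<noteq> 0"
    using assms(2,4) r by (auto simp: prime_dvd_mult_iff)
  then have "w \<noteq> 0"
    using eq \<open>x \<noteq> 0\<close> by auto
  have "multiplicity r ((e2 * z) * x) = multiplicity r x"
    using prime_elem_multiplicity_mult_distrib[OF prime_imp_prime_elem[OF r] \<open>e2 * z \<noteq> 0\<close> \<open>x \<noteq> 0\<close>]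
      \<open>\<not> r dvd e2 * z\<close> by (simp add: not_dvd_imp_multiplicity_0)
  moreover have "multiplicity r (y * w) = multiplicity r y + multiplicity r w"
    using prime_elem_multiplicity_mult_distrib[OF prime_imp_prime_elem[OF r] \<open>y \<noteq> 0\<close> \<open>w \<noteq> 0\<close>] .
  moreover have "\<not> r dvd w" if "r dvd x"
  proof
    assume "r dvd w"
    have "e1 * z = - w - e3 * x"
      unfolding w_def by simp
    then have "r dvd e1 * z"
      using \<open>r dvd w\<close> \<open>r dvd x\<close> by (simp add: dvd_diff)
    then show False
      using assms(2,3) r by (simp add: prime_dvd_mult_iff)
  qed
  ultimately show ?thesis
    using eq by (cases "r dvd x") (auto simp: not_dvd_imp_multiplicity_0)
qed

lemma even_multiplicity_prod_on_conic:
  fixes r x y z e1 e2 e3 :: int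
  assumes r: "prime r" and e: "\<not> r dvd e1" "\<not> r dvd e2" "\<not> r dvd e3"
    and xyz: "x \<noteq> 0" "y \<noteq> 0" "z \<noteq> 0"
    and "\<not> (r dvd x \<and> r dvd y \<and> r dvd z)"
    and conic: "e1 * y * z + e2 * z * x + e3 * x * y = 0"
  shows "even (multiplicity r (x * y * z))"
proof -
  have sum: "multiplicity r (x * y * z) = multiplicity r x + multiplicity r y + multiplicity r z"
    using xyz prime_elem_multiplicity_mult_distrib[OF prime_imp_prime_elem[OF r]] by simp
  consider "\<not> r dvd z" | "\<not> r dvd x" | "\<not> r dvd y"
    using assms(8) by blast
  then show ?thesis
  proof cases
    case 1
    then have "multiplicity r x = multiplicity r y"
      using multiplicity_eq_on_conic[OF r _ e(1,2) xyz(1,2) conic] by blast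
    then show ?thesis
      using sum 1 by (simp add: not_dvd_imp_multiplicity_0)
  next
    case 2
    have "e2 * z * x + e3 * x * y + e1 * y * z = 0"
      using conic by simp
    then have "multiplicity r y = multiplicity r z"
      using multiplicity_eq_on_conic[OF r 2 e(2,3) xyz(2,3)] by simp
    then show ?thesis
      using sum 2 by (simp add: not_dvd_imp_multiplicity_0)
  next
    case 3
    have "e3 * x * y + e1 * y * z + e2 * z * x = 0"
      using conic by simp
    then have "multiplicity r z = multiplicity r x"
      using multiplicity_eq_on_conic[OF r 3 e(3,1) xyz(3,1)] by simp
    then show ?thesis
      using sum 3 by (simp add: not_dvd_imp_multiplicity_0)
  qed
qed

lemma QuadRes_pstar_prod_on_conic:
  fixes e1 e2 e3 x y z p :: int
  assumes p: "prime p" "odd p"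
    and odd: "odd x" "odd y" "odd z"
    and conic: "e1 * y * z + e2 * z * x + e3 * x * y = 0"
    and primitive: "\<And>r. prime r \<Longrightarrow> \<not> (r dvd x \<and> r dvd y \<and> r dvd z)"
    and residues: "\<And>r. prime r \<Longrightarrow> odd r \<Longrightarrow> r dvd e1 * e2 * e3 \<Longrightarrow> \<not> r dvd p \<and> QuadRes r p"
  shows "QuadRes p (pstar (x * y * z))"
proof (rule QuadRes_pstar_if_odd_multiplicity)
  show "odd (x * y * z)"
    using odd by simp
next
  fix r assume r: "prime r" "odd (multiplicity r (x * y * z))"
  have "x \<noteq> 0" "y \<noteq> 0" "z \<noteq> 0"
    using odd by auto
  then have "r dvd e1 * e2 * e3"
    using even_multiplicity_prod_on_conic[OF r(1) _ _ _ _ _ _ primitive[OF r(1)] conic] r(2)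
    by (metis dvd_mult dvd_mult2)
  moreover have "r dvd x * y * z"
    using r(2) not_dvd_imp_multiplicity_0 by fastforce
  then have "odd r"
    using odd dvd_trans[of 2 r "x * y * z"] by auto
  ultimately show "QuadRes p (pstar r)"
    using reciprocity_QuadRes_pstar[OF p r(1)] residues[OF r(1)] by blast
qed

lemma QuadRes_prod_on_conic:
  fixes e1 e2 e3 x y z p :: int
  assumes p: "prime p"
    and odd: "odd x" "odd y" "odd z" and "[x * y * z = 1] (mod 4)"
    and conic: "e1 * y * z + e2 * z * x + e3 * x * y = 0"
    and primitive: "\<And>r. prime r \<Longrightarrow> \<not> (r dvd x \<and> r dvd y \<and> r dvd z)"
    and residues: "\<And>r. prime r \<Longrightarrow> odd r \<Longrightarrow> r dvd e1 * e2 * e3 \<Longrightarrow> \<not> r dvd p \<and> QuadRes r p"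
  shows "QuadRes p (x * y * z)"
proof (cases "p = 2")
  case True
  then show ?thesis
    using QuadRes_2_odd odd by simp
next
  case False
  then have "odd p"
    using primes_dvd_imp_eq[OF two_is_prime p] by auto
  then have "QuadRes p (pstar (x * y * z))"
    using QuadRes_pstar_prod_on_conic[OF p _ odd conic primitive residues] by blast
  then show ?thesis
    using pstar_eq_self[OF \<open>[x * y * z = 1] (mod 4)\<close>] by simp
qed

lemma half_sums_of_1_mod_4:
  fixes a b c :: int
  assumes "[a = 1] (mod 4)" "[b = 1] (mod 4)" "[c = 1] (mod 4)"
  defines "x \<equiv> (b + c) div 2" and "y \<equiv> (c + a) div 2" and "z \<equiv> (a + b) div 2"
  shows "b + c = 2 * x" "c + a = 2 * y" "a + b = 2 * z"
    and "odd x" "odd y" "odd z" "[x * y * z = 1] (mod 4)"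
proof -
  have "4 dvd a - 1" "4 dvd b - 1" "4 dvd c - 1"
    using assms(1-3) by (simp_all add: cong_iff_dvd_diff)
  then obtain a' b' c' where "a - 1 = 4 * a'" "b - 1 = 4 * b'" "c - 1 = 4 * c'"
    by (metis dvdE)
  then have abc: "a = 4 * a' + 1" "b = 4 * b' + 1" "c = 4 * c' + 1"
    by simp_all
  then have xyz: "x = 2 * (b' + c') + 1" "y = 2 * (c' + a') + 1" "z = 2 * (a' + b') + 1"
    unfolding x_def y_def z_def by simp_all
  then show "b + c = 2 * x" "c + a = 2 * y" "a + b = 2 * z" "odd x" "odd y" "odd z"
    using abc by simp_all
  define k where "k = a' + b' + c' + (b' + c') * (c' + a') + (c' + a') * (a' + b')
      + (a' + b') * (b' + c') + 2 * (b' + c') * (c' + a') * (a' + b')"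
  have "x * y * z = 4 * k + 1"
    unfolding xyz k_def by (simp add: algebra_simps)
  then show "[x * y * z = 1] (mod 4)"
    unfolding cong_def by simp
qed

lemma conic_in_half_sums:
  fixes e1 e2 e3 x y z :: int
  assumes "e1 + e2 + e3 = 0"
  shows "e1 * (y + z - x)\<^sup>2 + e2 * (z + x - y)\<^sup>2 + e3 * (x + y - z)\<^sup>2
    = 4 * (e1 * y * z + e2 * z * x + e3 * x * y)"
proof -
  have e3: "e3 = - e1 - e2"
    using assms by simp
  show ?thesis
    unfolding e3 by (simp add: algebra_simps power2_eq_square)
qed

theorem lemma2p8:
  fixes e1 e2 e3 a b c n :: int
  assumes "e1 \<noteq> 0" "e2 \<noteq> 0" "e3 \<noteq> 0"
    and "e1 + e2 + e3 = 0"
    and "gcd e1 (gcd e2 e3) \<in> {1, 2}"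
    and "multiplicity 2 e1 = multiplicity 2 e2"
    and "multiplicity 2 e2 < multiplicity 2 e3"
    and "gcd a (gcd b c) = 1"
    and "odd a" "odd b" "odd c"
    and "e1 * a^2 + e2 * b^2 + e3 * c^2 = 0"
    and "[a = 1] (mod 4)" "[b = 1] (mod 4)" "[c = 1] (mod 4)"
    and "n > 0"
    and "\<forall>p q. prime p \<and> p dvd n \<and> prime q \<and> odd q \<and> q dvd e1 * e2 * e3
           \<longrightarrow> \<not> q dvd p \<and> QuadRes q p"
  shows "8 dvd (a + b) * (b + c) * (c + a)
         \<and> [(a + b) * (b + c) * (c + a) div 8 = 1] (mod 4)
         \<and> (\<forall>p. prime p \<and> p dvd n \<longrightarrow> QuadRes p ((a + b) * (b + c) * (c + a) div 8))"
proof -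
  define x y z where "x = (b + c) div 2" and "y = (c + a) div 2" and "z = (a + b) div 2"
  note half_sums = half_sums_of_1_mod_4[OF assms(13-15), folded x_def y_def z_def]
  have abc: "a = y + z - x" "b = z + x - y" "c = x + y - z"
    using half_sums(1-3) by linarith+
  have conic: "e1 * y * z + e2 * z * x + e3 * x * y = 0"
    using conic_in_half_sums[OF assms(4), of y z x] assms(12) unfolding abc by simp
  have primitive: "\<not> (r dvd x \<and> r dvd y \<and> r dvd z)" if "prime r" for r
  proof
    assume "r dvd x \<and> r dvd y \<and> r dvd z"
    then have "r dvd gcd a (gcd b c)"
      unfolding abc by (simp add: dvd_add dvd_diff)
    then show False
      using assms(8) not_prime_unit \<open>prime r\<close> by metis
  qed
  have residue: "QuadRes p (x * y * z)" if "prime p" "p dvd n" for p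
    using QuadRes_prod_on_conic[OF \<open>prime p\<close> half_sums(4-7) conic primitive] assms(17) that
    by blast
  have "(a + b) * (b + c) * (c + a) = 8 * (x * y * z)"
    unfolding half_sums(1-3) by simp
  then show ?thesis
    using half_sums(7) residue by simp
qed

end
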